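(* Let $\mathcal{M}^r_{g,d}$ be an expected maximal Brill--Noether locus. Then $$(2r+1)\left\lfloor\frac{-\rho(g,r,d)+1}{2}\right\rfloor-\left\lfloor\frac{-\rho(g,r,d)}{2}\right\rfloor\le g$$ holds unless $\rho(g,r,d)=-(r+1)=-\lceil\sqrt g\rceil$ is odd and $g$ is not a perfect square.
   Context: $\rho(g,r,d)=g-(r+1)(g-d+r)$; $\mathcal{M}^r_{g,d}\subseteq\mathcal{M}_g$ is the locus of smooth genus $g$ curves admitting a $g^r_d$. A Brill--Noether locus is expected maximal if $d$ is maximal such that $\rho(g,r,d)<0$ and $\rho(g,r-1,d-1)\ge0$ (up to Serre duality); concretely the expected maximal loci are the $\mathcal{M}^r_{g,d}$ with $2r\le d\le g-1$, where $1\le r\le\lceil\sqrt g-1\rceil$ if $g\ge\lfloor\sqrt g\rfloor^2+\lfloor\sqrt g\rfloor$, $1\le r\le\lfloor\sqrt g-1\rfloor$ if $g<\lfloor\sqrt g\rfloor^2+\lfloor\sqrt g\rfloor$, and $d=r+\lceil gr/(r+1)\rceil-1$. *)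

theory Defs
  imports Complex_Main
begin

definition bn_rho :: "nat \<Rightarrow> nat \<Rightarrow> nat \<Rightarrow> int" where
  "bn_rho g r d = int g - (int r + 1) * (int g - int d + int r)"

text \<open>The parameters (g,r,d) of an expected maximal Brill--Noether locus M^r_{g,d},
  following the explicit description in the paper.\<close>
definition expected_maximal :: "nat \<Rightarrow> nat \<Rightarrow> nat \<Rightarrow> bool" where
  "expected_maximal g r d \<longleftrightarrow>
     2 * r \<le> d \<and> d + 1 \<le> g \<and> 1 \<le> r \<and>
     (if real g \<ge> (of_int \<lfloor>sqrt (real g)\<rfloor>)^2 + of_int \<lfloor>sqrt (real g)\<rfloor>
      then int r \<le> \<lceil>sqrt (real g) - 1\<rceil>
      else int r \<le> \<lfloor>sqrt (real g) - 1\<rfloor>) \<and>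
     int d = int r + \<lceil>real g * real r / (real r + 1)\<rceil> - 1"

end

theory Submission
  imports Defs "HOL-Library.Discrete_Functions"
begin

text \<open>Writing c = \<lceil>gr/(r+1)\<rceil>, so that d = r + c - 1, one finds
  n = -\<rho>(g,r,d) = r + 1 - (g mod (r+1)); in particular 1 \<le> n \<le> r + 1, and the
  left-hand side equals rn for even n and r(n+1)+1 for odd n. The expected-maximal bound on r
  gives either (r+1)^2 \<le> g, which suffices for every such n, or r = \<lfloor>\<surd>g\<rfloor> with
  r(r+1) \<le> g. In the latter case only odd n \<in> {r, r+1} could violate the inequality:
  n = r + 1 is the excluded case, and n = r means g \<equiv> 1 (mod r+1), so g \<noteq> r(r+1).\<close>

lemma floor_sqrt_of_nat: "\<lfloor>sqrt (real n)\<rfloor> = int (floor_sqrt n)"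
proof (rule floor_unique)
  show "real_of_int (int (floor_sqrt n)) \<le> sqrt (real n)"
    by (simp add: real_le_rsqrt flip: of_nat_power)
  have "real n < real ((floor_sqrt n + 1)^2)"
    using Suc_floor_sqrt_power2_gt[of n] by (simp only: of_nat_less_iff Suc_eq_plus1)
  then have "real n < (real (floor_sqrt n) + 1)^2" by (simp add: add.commute)
  then show "sqrt (real n) < real_of_int (int (floor_sqrt n)) + 1"
    by (simp add: real_less_lsqrt)
qed

lemma ceiling_sqrt_of_nat_eq:
  fixes n k :: nat
  assumes "k^2 < n" "n \<le> (k+1)^2"
  shows "\<lceil>sqrt (real n)\<rceil> = int k + 1"
proof (rule ceiling_unique)
  have "real k ^ 2 < real n" using assms(1) by (simp flip: of_nat_power)
  then show "real_of_int (int k + 1) - 1 < sqrt (real n)" by (simp add: real_less_rsqrt)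
  have "real n \<le> real ((k + 1) ^ 2)" using assms(2) by (simp only: of_nat_le_iff)
  then have "real n \<le> (real k + 1) ^ 2" by (simp add: add.commute)
  then show "sqrt (real n) \<le> real_of_int (int k + 1)" by (simp add: real_le_lsqrt)
qed

lemma ceiling_sqrt_nonsquare_if_floor_sqrt_pronic_le:
  fixes g :: nat
  defines "k \<equiv> floor_sqrt g"
  assumes "k * (k + 1) \<le> g" "0 < g"
  shows "\<lceil>sqrt (real g)\<rceil> = int k + 1" and "\<nexists>j. g = j^2"
proof -
  have "0 < k" using assms(3) unfolding k_def by simp
  then have "k^2 < g" using assms(2) by (simp add: power2_eq_square algebra_simps)
  moreover have "g \<le> (k + 1)^2"
    using Suc_floor_sqrt_power2_gt[of g] unfolding k_def by simp
  ultimately show "\<lceil>sqrt (real g)\<rceil> = int k + 1" by (rule ceiling_sqrt_of_nat_eq)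
  show "\<nexists>j. g = j^2"
    using \<open>k^2 < g\<close> unfolding k_def by auto
qed

lemma expected_maximal_floor_sqrt_cases:
  assumes "expected_maximal g r d"
  shows "r + 1 \<le> floor_sqrt g \<or> r = floor_sqrt g \<and> r * (r + 1) \<le> g"
proof -
  define k where "k = floor_sqrt g"
  have fl: "\<lfloor>sqrt (real g)\<rfloor> = int k" unfolding k_def by (rule floor_sqrt_of_nat)
  show ?thesis
  proof (cases "real g \<ge> (of_int \<lfloor>sqrt (real g)\<rfloor>)^2 + of_int \<lfloor>sqrt (real g)\<rfloor>")
    case True
    then have "real (k * (k + 1)) \<le> real g" using fl by (simp add: power2_eq_square algebra_simps)
    then have "k * (k + 1) \<le> g" by (simp only: of_nat_le_iff)
    moreover have "int r \<le> int k"
      using True assms ceiling_diff_floor_le_1[of "sqrt (real g)"] fl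
      unfolding expected_maximal_def by simp
    ultimately show ?thesis by (cases "r = k") (auto simp: k_def)
  next
    case False
    then have "int r \<le> int k - 1" using assms fl unfolding expected_maximal_def by simp
    then show ?thesis unfolding k_def by simp
  qed
qed

lemma ceiling_mult_div_Suc:
  fixes g r :: nat
  shows "(int r + 1) * \<lceil>real g * real r / (real r + 1)\<rceil> = int r * int g + int (g mod (r + 1))"
proof -
  define q where "q = g div (r + 1)"
  define j where "j = g mod (r + 1)"
  define c where "c = int r * int q + int j"
  have "g = (r + 1) * q + j" unfolding q_def j_def by (rule mult_div_mod_eq[symmetric])
  then have c: "(int r + 1) * c = int r * int g + int j"
    unfolding c_def by (simp add: algebra_simps)
  have "\<lceil>real g * real r / (real r + 1)\<rceil> = c"
  proof (rule ceiling_unique)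
    have "real_of_int ((int r + 1) * c) = real g * real r + real j"
      unfolding c by simp
    then have c_eq: "real_of_int c = (real g * real r + real j) / (real r + 1)"
      by (simp add: field_simps)
    show "real g * real r / (real r + 1) \<le> real_of_int c"
      unfolding c_eq by (simp add: divide_right_mono)
    have "j < r + 1" unfolding j_def by simp
    then have "real j < real r + 1" by (simp only: of_nat_less_iff flip: of_nat_Suc Suc_eq_plus1)
    then have "(real g * real r + real j - (real r + 1)) / (real r + 1) < real g * real r / (real r + 1)"
      by (simp add: divide_strict_right_mono)
    then show "real_of_int c - 1 < real g * real r / (real r + 1)"
      unfolding c_eq by (simp add: diff_divide_distrib)
  qed
  then show ?thesis using c unfolding j_def by simp
qed

lemma neg_bn_rho_eq:
  assumes "int d = int r + \<lceil>real g * real r / (real r + 1)\<rceil> - 1"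
  shows "- bn_rho g r d = int r + 1 - int (g mod (r + 1))"
proof -
  have "(int r + 1) * (int d - int r + 1) = int r * int g + int (g mod (r + 1))"
    using assms ceiling_mult_div_Suc[where g = g and r = r] by simp
  then show ?thesis unfolding bn_rho_def by (simp add: algebra_simps)
qed

lemma halves_combination_eq:
  fixes r n :: int
  shows "(2 * r + 1) * ((n + 1) div 2) - n div 2 = (if even n then r * n else r * (n + 1) + 1)"
  by (cases "even n") (auto elim!: evenE oddE simp: algebra_simps)

lemma halves_combination_le_square:
  fixes r n :: int
  assumes "0 \<le> r" "n \<le> r + 1"
  shows "(2 * r + 1) * ((n + 1) div 2) - n div 2 \<le> (r + 1)^2"
proof (cases "even n")
  case True
  have "r * n \<le> r * (r + 1)" using assms by (intro mult_left_mono) auto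
  then show ?thesis using True assms(1) by (simp add: halves_combination_eq power2_eq_square algebra_simps)
next
  case False
  have "r * (n + 1) \<le> r * (r + 2)" using assms by (intro mult_left_mono) auto
  then show ?thesis using False by (simp add: halves_combination_eq power2_eq_square algebra_simps)
qed

lemma halves_combination_le_pronic:
  fixes r g :: nat
  defines "n \<equiv> int r + 1 - int (g mod (r + 1))"
  assumes "1 \<le> r" "r * (r + 1) \<le> g" "\<not> (n = int r + 1 \<and> odd n)"
  shows "(2 * int r + 1) * ((n + 1) div 2) - n div 2 \<le> int g"
proof -
  have "int (r * (r + 1)) \<le> int g" using assms(3) by (rule of_nat_mono)
  then have pronic: "int r * (int r + 1) \<le> int g" by (simp add: algebra_simps)
  have "(if even n then int r * n else int r * (n + 1) + 1) \<le> int g"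
  proof (cases "even n")
    case True
    have "int r * n \<le> int r * (int r + 1)" unfolding n_def by (intro mult_left_mono) auto
    also note pronic
    finally show ?thesis using True by simp
  next
    case False
    then have "n \<noteq> int r + 1" using assms(4) by blast
    then have "g mod (r + 1) \<noteq> 0" unfolding n_def by simp
    then consider "g mod (r + 1) = 1" | "2 \<le> g mod (r + 1)" by linarith
    then have "int r * (n + 1) + 1 \<le> int g"
    proof cases
      case 1
      then have "g \<noteq> r * (r + 1)" by (metis mod_mult_self2_is_0 zero_neq_one)
      then have "r * (r + 1) + 1 \<le> g" using assms(3) by linarith
      then have "int (r * (r + 1) + 1) \<le> int g" by (rule of_nat_mono)
      then show ?thesis using 1 unfolding n_def by (simp add: algebra_simps)
    next
      case 2
      then have "int r * (n + 1) \<le> int r * int r" unfolding n_def by (intro mult_left_mono) auto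
      also have "\<dots> < int r * (int r + 1)" using assms(2) by (simp add: algebra_simps)
      also note pronic
      finally show ?thesis by simp
    qed
    then show ?thesis using False by simp
  qed
  then show ?thesis by (simp only: halves_combination_eq)
qed

theorem lemma3p2:
  fixes g r d :: nat
  assumes "expected_maximal g r d"
    and "\<not> (bn_rho g r d = - (int r + 1) \<and> int r + 1 = \<lceil>sqrt (real g)\<rceil> \<and>
            odd (bn_rho g r d) \<and> \<not> (\<exists>k::nat. g = k^2))"
  shows "(2 * int r + 1) * \<lfloor>(real_of_int (- bn_rho g r d) + 1) / 2\<rfloor>
           - \<lfloor>real_of_int (- bn_rho g r d) / 2\<rfloor> \<le> int g"
proof -
  define n where "n = - bn_rho g r d"
  have r: "1 \<le> r" and g: "0 < g" using assms(1) unfolding expected_maximal_def by auto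
  have n: "n = int r + 1 - int (g mod (r + 1))"
    unfolding n_def using assms(1) by (intro neg_bn_rho_eq) (simp add: expected_maximal_def)
  have "(2 * int r + 1) * \<lfloor>(real_of_int n + 1) / 2\<rfloor> - \<lfloor>real_of_int n / 2\<rfloor>
          = (2 * int r + 1) * ((n + 1) div 2) - n div 2"
    using floor_divide_of_int_eq[where 'a = real, of "n + 1" 2] floor_divide_of_int_eq[where 'a = real, of n 2]
    by simp
  also have "\<dots> \<le> int g"
    using expected_maximal_floor_sqrt_cases[OF assms(1)]
  proof
    assume "r + 1 \<le> floor_sqrt g"
    then have "(r + 1)^2 \<le> g" using floor_sqrt_power2_le[of g] power_mono le_trans by blast
    then have "(int r + 1)^2 \<le> int g" by (metis of_nat_1 of_nat_add of_nat_le_iff of_nat_power)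
    with halves_combination_le_square[of "int r" n] show ?thesis unfolding n by simp
  next
    assume pronic: "r = floor_sqrt g \<and> r * (r + 1) \<le> g"
    then have "\<lceil>sqrt (real g)\<rceil> = int r + 1" "\<nexists>j. g = j^2"
      using ceiling_sqrt_nonsquare_if_floor_sqrt_pronic_le g by auto
    then have "\<not> (n = int r + 1 \<and> odd n)"
      using assms(2) unfolding n_def by (metis minus_minus even_minus)
    then show ?thesis using halves_combination_le_pronic r pronic unfolding n by blast
  qed
  finally show ?thesis unfolding n_def .
qed

end
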